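(* For every type $\tau\in\mathbb{T}_C$, $|\bigcap\mathbb{P}(\tau)|\le|\tau|^2$, where $|\cdot|$ denotes the number of nodes in the syntax tree of a type.
   Context: Types $\mathbb{T}_C\ni\tau ::= a\mid\alpha\mid\omega\mid\tau_1\to\tau_2\mid\tau_1\cap\tau_2\mid c(\tau)$ ($a$ constants, $\alpha$ type variables, $c$ unary constructors). Paths: $\pi ::= a\mid\alpha\mid\sigma\to\pi\mid c(\omega)\mid c(\pi)$. $\mathbb{P}(a)=\{a\}$, $\mathbb{P}(\alpha)=\{\alpha\}$, $\mathbb{P}(\omega)=\emptyset$, $\mathbb{P}(\sigma\to\tau)=\{\sigma\to\pi\mid\pi\in\mathbb{P}(\tau)\}$, $\mathbb{P}(\sigma\cap\tau)=\mathbb{P}(\sigma)\cup\mathbb{P}(\tau)$, $\mathbb{P}(c(\tau))=\{c(\omega)\}$ if $\mathbb{P}(\tau)=\emptyset$, else $\{c(\pi)\mid\pi\in\mathbb{P}(\tau)\}$. $\bigcap\mathbb{P}(\tau)$ denotes the type $\pi_1\cap\cdots\cap\pi_n$ where $\mathbb{P}(\tau)=\{\pi_1,\ldots,\pi_n\}$, and $\omega$ if $\mathbb{P}(\tau)=\emptyset$. *)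

theory Defs
  imports Main
begin

datatype ('a, 'v, 'c) ty =
    Const 'a
  | TVar 'v
  | Omega
  | Arr "('a, 'v, 'c) ty" "('a, 'v, 'c) ty"
  | Inter "('a, 'v, 'c) ty" "('a, 'v, 'c) ty"
  | Con 'c "('a, 'v, 'c) ty"

fun tsize :: "('a, 'v, 'c) ty \<Rightarrow> nat" where
  "tsize (Const a) = 1"
| "tsize (TVar v) = 1"
| "tsize Omega = 1"
| "tsize (Arr s t) = 1 + tsize s + tsize t"
| "tsize (Inter s t) = 1 + tsize s + tsize t"
| "tsize (Con c t) = 1 + tsize t"

fun paths :: "('a, 'v, 'c) ty \<Rightarrow> ('a, 'v, 'c) ty set" where
  "paths (Const a) = {Const a}"
| "paths (TVar v) = {TVar v}"
| "paths Omega = {}"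
| "paths (Arr s t) = {Arr s p | p. p \<in> paths t}"
| "paths (Inter s t) = paths s \<union> paths t"
| "paths (Con c t) = (if paths t = {} then {Con c Omega} else {Con c p | p. p \<in> paths t})"

fun inter_list :: "('a, 'v, 'c) ty list \<Rightarrow> ('a, 'v, 'c) ty" where
  "inter_list [] = Omega"
| "inter_list [p] = p"
| "inter_list (p # ps) = Inter p (inter_list ps)"

definition bigcap_paths :: "('a, 'v, 'c) ty \<Rightarrow> ('a, 'v, 'c) ty" where
  "bigcap_paths t = inter_list (SOME ps. distinct ps \<and> set ps = paths t)"

end

theory Submission
  imports Defs
begin

text \<open>The intersection of the paths of \<open>\<tau>\<close> has size (sum of the path sizes) + (number of
  paths) - 1, so it suffices to bound the weight \<open>\<Sum>\<pi>\<in>P(\<tau>). |\<pi>| + 1\<close> by \<open>|\<tau>|\<^sup>2 + 1\<close>.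
  This goes by induction on \<open>\<tau>\<close>: an arrow \<open>\<sigma> \<rightarrow> \<tau>\<close> prefixes each of the at most \<open>|\<tau>|\<close>
  paths of \<open>\<tau>\<close> with \<open>\<sigma>\<close>, adding at most \<open>|\<tau>| (|\<sigma>| + 1)\<close>, and the remaining cases are
  cheaper.\<close>

lemma paths_Arr_image [simp]: "paths (Arr s t) = Arr s ` paths t"
  by auto

lemma paths_Con_image [simp]:
  "paths (Con c t) = (if paths t = {} then {Con c Omega} else Con c ` paths t)"
  by auto

declare paths.simps(4,6) [simp del]

lemma finite_paths: "finite (paths t)"
  by (induction t) auto

lemma card_paths_le_tsize: "card (paths t) \<le> tsize t"
proof (induction t)
  case (Arr s t)
  then show ?case
    using card_image_le[OF finite_paths, of "Arr s" t] by simp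
next
  case (Inter s t)
  then show ?case using card_Un_le[of "paths s" "paths t"] by simp
next
  case (Con c t)
  then show ?case
    using card_image_le[OF finite_paths, of "Con c" t] by auto
qed auto

lemma tsize_pos: "0 < tsize t"
  by (cases t) auto

definition paths_weight :: "('a, 'v, 'c) ty \<Rightarrow> nat" where
  "paths_weight t = (\<Sum>p\<in>paths t. tsize p + 1)"

lemma sum_paths_shifted_size:
  "(\<Sum>p\<in>paths t. tsize p + 1 + k) = paths_weight t + k * card (paths t)"
  unfolding paths_weight_def by (simp only: sum.distrib sum_constant) simp

lemma paths_weight_Arr:
  "paths_weight (Arr s t) = paths_weight t + (tsize s + 1) * card (paths t)"
proof -
  have "paths_weight (Arr s t) = (\<Sum>p\<in>paths t. tsize p + 1 + (tsize s + 1))"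
    unfolding paths_weight_def
    by (simp add: sum.reindex inj_on_def algebra_simps)
  then show ?thesis by (simp only: sum_paths_shifted_size)
qed

lemma paths_weight_Con:
  "paths t \<noteq> {} \<Longrightarrow> paths_weight (Con c t) = paths_weight t + card (paths t)"
  using sum_paths_shifted_size[where k = 1 and t = t]
  by (simp add: paths_weight_def sum.reindex inj_on_def)

lemma paths_weight_Inter: "paths_weight (Inter s t) \<le> paths_weight s + paths_weight t"
  unfolding paths_weight_def by (simp add: sum_Un_nat finite_paths)

lemma paths_weight_le: "paths_weight t \<le> (tsize t)\<^sup>2 + 1"
proof (induction t)
  case (Arr s t)
  have "paths_weight (Arr s t) \<le> (tsize t)\<^sup>2 + 1 + (tsize s + 1) * tsize t"
    using Arr card_paths_le_tsize[of t] unfolding paths_weight_Arr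
    by (intro add_mono mult_left_mono) auto
  also have "\<dots> \<le> (tsize (Arr s t))\<^sup>2 + 1"
    by (simp add: power2_eq_square algebra_simps)
  finally show ?case .
next
  case (Inter s t)
  then show ?case
    using paths_weight_Inter[of s t] by (simp add: power2_eq_square algebra_simps)
next
  case (Con c t)
  show ?case
  proof (cases "paths t = {}")
    case True
    then show ?thesis
      using tsize_pos[of t] by (simp add: paths_weight_def power2_eq_square)
  next
    case False
    then show ?thesis
      using Con card_paths_le_tsize[of t]
      by (simp add: paths_weight_Con power2_eq_square algebra_simps)
  qed
qed (simp_all add: paths_weight_def)

lemma tsize_inter_list:
  "ps \<noteq> [] \<Longrightarrow> tsize (inter_list ps) + 1 = (\<Sum>p\<leftarrow>ps. tsize p + 1)"
  by (induction ps rule: inter_list.induct) auto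

lemma bigcap_paths_eq_inter_list:
  obtains ps where "distinct ps" "set ps = paths t" "bigcap_paths t = inter_list ps"
proof -
  have "\<exists>ps. distinct ps \<and> set ps = paths t"
    using finite_distinct_list[OF finite_paths] by blast
  from someI_ex[OF this] show ?thesis
    using that unfolding bigcap_paths_def by blast
qed

theorem lemma4p9:
  fixes \<tau> :: "('a, 'v, 'c) ty"
  shows "tsize (bigcap_paths \<tau>) \<le> (tsize \<tau>)^2"
proof -
  obtain ps where ps: "distinct ps" "set ps = paths \<tau>" "bigcap_paths \<tau> = inter_list ps"
    by (rule bigcap_paths_eq_inter_list)
  show ?thesis
  proof (cases "ps = []")
    case True
    then show ?thesis using ps(3) tsize_pos[of \<tau>] by (simp add: power2_eq_square)
  next
    case False
    have "tsize (bigcap_paths \<tau>) + 1 = (\<Sum>p\<leftarrow>ps. tsize p + 1)"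
      using ps(3) tsize_inter_list[OF False] by simp
    also have "\<dots> = paths_weight \<tau>"
      using ps(1,2) by (simp only: sum_list_distinct_conv_sum_set paths_weight_def)
    finally have "tsize (bigcap_paths \<tau>) + 1 = paths_weight \<tau>" .
    with paths_weight_le[of \<tau>] show ?thesis by simp
  qed
qed

end
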